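(* Let $\mathcal X$ be finite, $P_0,P_1$ distributions on $\mathcal X$ with full support, $\gamma>0$ and $\alpha>0$. Define $$\theta_0^{\rm dist}=\frac2\alpha\max_{Q:\,D(Q\|P_0)=\gamma}\mathrm{Var}_{P_0}\Big(\frac{Q(X)}{P_0(X)}\Big),\qquad \theta_0^{\rm adv}=\frac2\alpha\max_{\hat Q:\,D(\hat Q\|P_0)=\gamma}\mathrm{Var}_{\hat Q}\Big(\log\frac{\hat Q(X)}{P_0(X)}\Big).$$ Then $\theta_0^{\rm adv}\le\theta_0^{\rm dist}$.
   Context: $D$ is relative entropy. $\theta_0^{\rm dist}$ is the sensitivity of the type-I error exponent of Hoeffding's generalized likelihood ratio test (decide 1 iff the observation type $\hat T$ satisfies $D(\hat T\|P_0)\ge\gamma$) to mismatch in the test distribution within a divergence ball, and $\theta_0^{\rm adv}$ its sensitivity to adversarial perturbation of the observation type within a divergence ball; $\alpha$ is the order of the Rényi divergence or $f''(1)$ for the $f$-divergence used to define the balls. *)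

theory Defs
  imports Complex_Main
begin

definition is_dist :: "('a::finite \<Rightarrow> real) \<Rightarrow> bool" where
  "is_dist Q \<longleftrightarrow> (\<forall>x. Q x \<ge> 0) \<and> (\<Sum>x\<in>UNIV. Q x) = 1"

text \<open>Relative entropy D(Q||P) (natural log), convention 0 log 0 = 0
  (automatic since ln 0 = 0 in Isabelle).\<close>
definition rel_entropy :: "('a::finite \<Rightarrow> real) \<Rightarrow> ('a \<Rightarrow> real) \<Rightarrow> real" where
  "rel_entropy Q P = (\<Sum>x\<in>UNIV. Q x * ln (Q x / P x))"

definition variance_under :: "('a::finite \<Rightarrow> real) \<Rightarrow> ('a \<Rightarrow> real) \<Rightarrow> real" where
  "variance_under P f = (\<Sum>x\<in>UNIV. P x * (f x - (\<Sum>y\<in>UNIV. P y * f y))\<^sup>2)"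

definition theta0_dist :: "real \<Rightarrow> real \<Rightarrow> ('a::finite \<Rightarrow> real) \<Rightarrow> real" where
  "theta0_dist \<alpha> \<gamma> P0 = 2 / \<alpha> *
     Sup {variance_under P0 (\<lambda>x. Q x / P0 x) | Q. is_dist Q \<and> rel_entropy Q P0 = \<gamma>}"

definition theta0_adv :: "real \<Rightarrow> real \<Rightarrow> ('a::finite \<Rightarrow> real) \<Rightarrow> real" where
  "theta0_adv \<alpha> \<gamma> P0 = 2 / \<alpha> *
     Sup {variance_under Q (\<lambda>x. ln (Q x / P0 x)) | Q. is_dist Q \<and> rel_entropy Q P0 = \<gamma>}"

end

theory Submission
  imports Defs
begin

text \<open>Write \<open>L = Q / P0\<close> for the likelihood ratio. Since \<open>E\<^sub>P\<^sub>0 L = 1\<close>, the right-hand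
  variance is \<open>E\<^sub>P\<^sub>0 (L - 1)\<^sup>2\<close>, while the left-hand one is at most the second moment
  \<open>E\<^sub>Q (ln L)\<^sup>2 = E\<^sub>P\<^sub>0 (L (ln L)\<^sup>2)\<close>. So it suffices that \<open>r (ln r)\<^sup>2 \<le> (r - 1)\<^sup>2\<close> for
  \<open>r \<ge> 0\<close>; with \<open>r = t\<^sup>2\<close> this is \<open>|2 ln t| \<le> |t - 1/t|\<close>, which holds because
  \<open>t - 1/t - 2 ln t\<close> is increasing (its derivative is \<open>(1 - 1/t)\<^sup>2\<close>) and vanishes at 1.
  The inequality between the variances holds for each \<open>Q\<close>, hence between the suprema.\<close>

lemma sub_inverse_minus_double_ln_mono:
  fixes a b :: real
  assumes "0 < a" "a \<le> b"
  shows "a - 1/a - 2 * ln a \<le> b - 1/b - 2 * ln b"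
proof (rule DERIV_nonneg_imp_increasing_open[OF assms(2)])
  show "continuous_on {a..b} (\<lambda>t. t - 1/t - 2 * ln t)"
    using assms(1) by (intro continuous_intros) auto
  fix x :: real
  assume "a < x" "x < b"
  then have "x > 0" using assms by linarith
  then have "DERIV (\<lambda>t. t - 1/t - 2 * ln t) x :> (1 - 1/x)\<^sup>2"
    by (auto intro!: derivative_eq_intros simp: power2_eq_square field_simps)
  then show "\<exists>y. DERIV (\<lambda>t. t - 1/t - 2 * ln t) x :> y \<and> 0 \<le> y" by auto
qed

lemma abs_double_ln_le_abs_sub_inverse:
  fixes t :: real
  assumes "0 < t"
  shows "\<bar>2 * ln t\<bar> \<le> \<bar>t - 1/t\<bar>"
proof (cases "t \<ge> 1")
  case True
  then have "1 - 1/1 - 2 * ln 1 \<le> t - 1/t - 2 * ln t"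
    by (intro sub_inverse_minus_double_ln_mono) auto
  with True show ?thesis by auto
next
  case False
  with assms have "t - 1/t - 2 * ln t \<le> 1 - 1/1 - 2 * ln 1"
    by (intro sub_inverse_minus_double_ln_mono) auto
  moreover have "ln t \<le> 0" using False assms by simp
  ultimately show ?thesis by auto
qed

lemma mult_ln_squared_le:
  fixes r :: real
  assumes "r \<ge> 0"
  shows "r * (ln r)\<^sup>2 \<le> (r - 1)\<^sup>2"
proof (cases "r = 0")
  case True
  then show ?thesis by simp
next
  case False
  define t where "t = sqrt r"
  have "t > 0" and r: "r = t\<^sup>2" using False assms by (auto simp: t_def)
  then have ln_r: "ln r = 2 * ln t" by (simp add: ln_realpow)
  have "\<bar>t * (2 * ln t)\<bar> \<le> \<bar>t * (t - 1/t)\<bar>"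
    using abs_double_ln_le_abs_sub_inverse[OF \<open>t > 0\<close>] \<open>t > 0\<close> by (simp add: abs_mult)
  then have "(t * (2 * ln t))\<^sup>2 \<le> (t * (t - 1/t))\<^sup>2" by (simp only: abs_le_square_iff)
  also have "t * (t - 1/t) = r - 1" using \<open>t > 0\<close> r by (simp add: power2_eq_square field_simps)
  finally have "r * (2 * ln t)\<^sup>2 \<le> (r - 1)\<^sup>2" by (simp add: r power_mult_distrib)
  then show ?thesis by (simp only: ln_r)
qed

lemma is_dist_le_1:
  assumes "is_dist Q"
  shows "Q x \<le> 1"
proof -
  have "Q x \<le> (\<Sum>y\<in>UNIV. Q y)"
    using assms by (intro member_le_sum) (auto simp: is_dist_def)
  then show ?thesis using assms by (simp add: is_dist_def)
qed

lemma variance_under_eq_second_moment_minus_mean_squared: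
  fixes P :: "'a::finite \<Rightarrow> real"
  assumes "(\<Sum>x\<in>UNIV. P x) = 1"
  shows "variance_under P f = (\<Sum>x\<in>UNIV. P x * (f x)\<^sup>2) - (\<Sum>x\<in>UNIV. P x * f x)\<^sup>2"
proof -
  define m where "m = (\<Sum>x\<in>UNIV. P x * f x)"
  have "variance_under P f
      = (\<Sum>x\<in>UNIV. P x * (f x)\<^sup>2) - 2 * m * (\<Sum>x\<in>UNIV. P x * f x) + m\<^sup>2 * (\<Sum>x\<in>UNIV. P x)"
    by (simp add: variance_under_def m_def power2_diff algebra_simps sum.distrib sum_subtractf
        sum_distrib_left sum_distrib_right)
  then show ?thesis by (simp add: assms m_def power2_eq_square)
qed

lemma variance_under_le_second_moment:
  fixes P :: "'a::finite \<Rightarrow> real"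
  assumes "(\<Sum>x\<in>UNIV. P x) = 1"
  shows "variance_under P f \<le> (\<Sum>x\<in>UNIV. P x * (f x)\<^sup>2)"
  by (simp add: variance_under_eq_second_moment_minus_mean_squared[OF assms])

lemma variance_under_likelihood_ratio:
  fixes P Q :: "'a::finite \<Rightarrow> real"
  assumes "\<forall>x. P x > 0" and "(\<Sum>x\<in>UNIV. Q x) = 1"
  shows "variance_under P (\<lambda>x. Q x / P x) = (\<Sum>x\<in>UNIV. P x * (Q x / P x - 1)\<^sup>2)"
proof -
  have "(\<Sum>y\<in>UNIV. P y * (Q y / P y)) = 1"
    using assms by (simp add: less_imp_neq[symmetric])
  then show ?thesis by (simp add: variance_under_def)
qed

lemma variance_log_ratio_le_variance_ratio:
  fixes P Q :: "'a::finite \<Rightarrow> real"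
  assumes P: "\<forall>x. P x > 0" and Q: "is_dist Q"
  shows "variance_under Q (\<lambda>x. ln (Q x / P x)) \<le> variance_under P (\<lambda>x. Q x / P x)"
proof -
  have Q_nonneg: "\<And>x. Q x \<ge> 0" and Q_sum: "(\<Sum>x\<in>UNIV. Q x) = 1"
    using Q by (auto simp: is_dist_def)
  have "variance_under Q (\<lambda>x. ln (Q x / P x)) \<le> (\<Sum>x\<in>UNIV. Q x * (ln (Q x / P x))\<^sup>2)"
    using Q_sum by (rule variance_under_le_second_moment)
  also have "\<dots> = (\<Sum>x\<in>UNIV. P x * (Q x / P x * (ln (Q x / P x))\<^sup>2))"
    using P by (intro sum.cong) auto
  also have "\<dots> \<le> (\<Sum>x\<in>UNIV. P x * (Q x / P x - 1)\<^sup>2)"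
    using P Q_nonneg by (intro sum_mono mult_left_mono mult_ln_squared_le) (auto simp: less_imp_le)
  also have "\<dots> = variance_under P (\<lambda>x. Q x / P x)"
    using variance_under_likelihood_ratio[OF P Q_sum] by simp
  finally show ?thesis .
qed

lemma variance_ratio_le_sum_inverse:
  fixes P Q :: "'a::finite \<Rightarrow> real"
  assumes P: "is_dist P" "\<forall>x. P x > 0" and Q: "is_dist Q"
  shows "variance_under P (\<lambda>x. Q x / P x) \<le> (\<Sum>x\<in>UNIV. 1 / P x)"
proof -
  have "variance_under P (\<lambda>x. Q x / P x) \<le> (\<Sum>x\<in>UNIV. P x * (Q x / P x)\<^sup>2)"
    using P(1) by (intro variance_under_le_second_moment) (simp add: is_dist_def)
  also have "\<dots> = (\<Sum>x\<in>UNIV. (Q x)\<^sup>2 / P x)"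
    using P(2) by (intro sum.cong) (auto simp: power2_eq_square)
  also have "\<dots> \<le> (\<Sum>x\<in>UNIV. 1 / P x)"
  proof (intro sum_mono divide_right_mono)
    fix x
    have "0 \<le> Q x" "Q x \<le> 1" using Q is_dist_le_1 by (auto simp: is_dist_def)
    then show "(Q x)\<^sup>2 \<le> 1" by (simp add: power_le_one)
    show "0 \<le> P x" using P(2) less_imp_le by blast
  qed
  finally show ?thesis .
qed

theorem corollary4:
  fixes P0 P1 :: "'a::finite \<Rightarrow> real" and \<gamma> \<alpha> :: real
  assumes "is_dist P0" and "is_dist P1"
    and "\<forall>x. P0 x > 0" and "\<forall>x. P1 x > 0"
    and "\<gamma> > 0" and "\<alpha> > 0"
  shows "theta0_adv \<alpha> \<gamma> P0 \<le> theta0_dist \<alpha> \<gamma> P0"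
proof -
  define S where "S = {Q. is_dist Q \<and> rel_entropy Q P0 = \<gamma>}"
  define var_adv where "var_adv Q = variance_under Q (\<lambda>x. ln (Q x / P0 x))" for Q
  define var_dist where "var_dist Q = variance_under P0 (\<lambda>x. Q x / P0 x)" for Q
  have "Sup (var_adv ` S) \<le> Sup (var_dist ` S)"
  proof (cases "S = {}")
    case False
    have "bdd_above (var_dist ` S)"
      using variance_ratio_le_sum_inverse[OF assms(1,3)]
      by (intro bdd_aboveI[of _ "\<Sum>x\<in>UNIV. 1 / P0 x"]) (auto simp: S_def var_dist_def)
    moreover have "\<And>Q. Q \<in> S \<Longrightarrow> var_adv Q \<le> var_dist Q"
      using variance_log_ratio_le_variance_ratio[OF assms(3)] by (auto simp: S_def var_adv_def var_dist_def)
    ultimately show ?thesis using False by (intro cSUP_mono) auto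
  qed simp
  then show ?thesis
    unfolding theta0_adv_def theta0_dist_def setcompr_eq_image
    using assms(6) by (intro mult_left_mono) (auto simp: S_def var_adv_def var_dist_def)
qed

end
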